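(* Let $\alpha>1$, $s>0$. Suppose that for every pair of edge-level adjacent datasets $\mathcal{D},\mathcal{D}'$ the DPDGC weights satisfy $D_\alpha((\mathbf{W}^{(A)},\mathbf{b})\,\|\,(\mathbf{W}^{(A)\prime},\mathbf{b}'))\le\gamma_1$. Then the DPDGC model is edge $(\alpha,\gamma_1+\frac{\alpha}{2s^2})$-GDP: for every $v\in[n]\setminus[m]$ and every pair of edge-level adjacent datasets $\mathcal{D},\mathcal{D}'$, $D_\alpha(\mathcal{M}(v;\mathcal{D})\,\|\,\mathcal{M}(v;\mathcal{D}'))\le\gamma_1+\frac{\alpha}{2s^2}$.
   Context: A graph dataset is $\mathcal{D}=(\mathbf{X},\mathbf{Y},\mathbf{A})$ with node set $[n]$, $\mathbf{X}\in\mathbb{R}^{n\times F}$, $\mathbf{Y}\in\{0,1\}^{m\times C}$ (labels of nodes $1,\dots,m$; nodes in $[n]\setminus[m]$ are to be predicted), and $\mathbf{A}\in\{0,1\}^{n\times n}$ the adjacency matrix of a directed graph without self-loops. Edge-level adjacency: same $\mathbf{X},\mathbf{Y}$, adjacency matrices differing in exactly one entry. Rényi divergence of order $\alpha>1$: $D_\alpha(X\|Y)=\frac{1}{\alpha-1}\log\mathbb{E}_{x\sim Q}[(P(x)/Q(x))^\alpha]$. DPDGC model: $(\mathbf{W}^{(A)},\mathbf{b})$ is a random output of a randomized algorithm on the dataset, with every row of $\mathbf{W}^{(A)}\in\mathbb{R}^{n\times h}$ of Euclidean norm $1$ and $\mathbf{b}\in\mathbb{R}^h$; $\mathbf{Z}=\mathbf{A}\mathbf{W}^{(A)}+\mathbf{1}_n\mathbf{b}^\top+\mathbf{N}$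 with $\mathbf{N}$ having i.i.d. $\mathcal{N}(0,s^2)$ entries independent of everything else; $\Theta=\mathcal{B}(\mathbf{X},\mathbf{Y},\mathbf{Z})$ for some randomized algorithm $\mathcal{B}$ whose internal randomness is independent of everything else; the prediction for $v$ is $\widehat{\mathbf{Y}}_v=g(\Theta,\mathbf{X}_v,\mathbf{Z}_v)$ for a fixed deterministic $g$; and $\mathcal{M}(v;\mathcal{D})=(\widehat{\mathbf{Y}}_v,(\mathbf{W}^{(A)},\mathbf{b},\Theta))$. *)

theory Defs
  imports "HOL-Probability.Probability"
begin

definition renyi_div :: "real \<Rightarrow> 'a measure \<Rightarrow> 'a measure \<Rightarrow> ereal" where
  "renyi_div \<alpha> P Q =
    (if sets P = sets Q \<and> absolutely_continuous Q P then
       (let I = (\<integral>\<^sup>+ x. ennreal (enn2real (RN_deriv Q P x) powr \<alpha>) \<partial>Q)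
        in if I = \<top> then \<infinity> else ereal (ln (enn2real I) / (\<alpha> - 1)))
     else \<infinity>)"

text \<open>Graph datasets: features X (n x F), labels Y (only rows of labelled nodes
  are meaningful; other rows are fixed to all-False), adjacency A of a directed
  graph. Nodes are the finite type 'n, labelled nodes the set Lab.\<close>
type_synonym ('n, 'f, 'c) dataset =
  "(real^'f^'n) \<times> ('n \<Rightarrow> 'c \<Rightarrow> bool) \<times> ('n \<Rightarrow> 'n \<Rightarrow> bool)"

definition valid_dataset :: "'n set \<Rightarrow> ('n::finite, 'f::finite, 'c::finite) dataset \<Rightarrow> bool" where
  "valid_dataset Lab D = (case D of (X, Y, A) \<Rightarrow>
     (\<forall>i. \<not> A i i) \<and> (\<forall>i. i \<notin> Lab \<longrightarrow> Y i = (\<lambda>_. False)))"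

definition edge_adjacent ::
  "'n set \<Rightarrow> ('n::finite, 'f::finite, 'c::finite) dataset \<Rightarrow> ('n, 'f, 'c) dataset \<Rightarrow> bool" where
  "edge_adjacent Lab D D' = (case D of (X, Y, A) \<Rightarrow> case D' of (X', Y', A') \<Rightarrow>
     valid_dataset Lab D \<and> valid_dataset Lab D' \<and> X = X' \<and> Y = Y' \<and>
     card {(i, j). A i j \<noteq> A' i j} = 1)"

definition gauss_noise :: "real \<Rightarrow> (real^'h::finite^'n::finite) measure" where
  "gauss_noise s = distr (PiM UNIV (\<lambda>_::'n \<times> 'h. density lborel (normal_density 0 s)))
                         borel (\<lambda>f. \<chi> i k. f (i, k))"

definition dpdgc_Z :: "('n::finite \<Rightarrow> 'n \<Rightarrow> bool) \<Rightarrow> real^'h::finite^'n \<Rightarrow> real^'h \<Rightarrow> real^'h^'n \<Rightarrow> real^'h^'n" where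
  "dpdgc_Z A W b N = (\<chi> i k. (\<Sum>j\<in>UNIV. (if A i j then 1 else 0) * W $ j $ k) + b $ k + N $ i $ k)"

text \<open>The DPDGC mechanism M(v; D) = (prediction for v, (W, b, Theta)).
  Wd: randomized algorithm producing (W, b); B: randomized algorithm (Markov kernel)
  producing Theta from (X, Y, Z); g: deterministic prediction map.\<close>
definition dpdgc_mech ::
  "real \<Rightarrow> (('n::finite, 'f::finite, 'c::finite) dataset \<Rightarrow> ((real^'h::finite^'n) \<times> (real^'h)) measure)
   \<Rightarrow> (real^'f^'n \<Rightarrow> ('n \<Rightarrow> 'c \<Rightarrow> bool) \<Rightarrow> real^'h^'n \<Rightarrow> 'th measure)
   \<Rightarrow> ('th \<Rightarrow> real^'f \<Rightarrow> real^'h \<Rightarrow> 'y) \<Rightarrow> 'th measure \<Rightarrow> 'y measure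
   \<Rightarrow> 'n \<Rightarrow> ('n, 'f, 'c) dataset \<Rightarrow> ('y \<times> (((real^'h^'n) \<times> (real^'h)) \<times> 'th)) measure" where
  "dpdgc_mech s Wd B g MT MY v D = (case D of (X, Y, A) \<Rightarrow>
     Wd D \<bind> (\<lambda>wb. gauss_noise s \<bind> (\<lambda>N.
       let Z = dpdgc_Z A (fst wb) (snd wb) N in
       B X Y Z \<bind> (\<lambda>\<theta>. return (MY \<Otimes>\<^sub>M (borel \<Otimes>\<^sub>M MT)) (g \<theta> (X $ v) (Z $ v), (wb, \<theta>))))))"

end

theory Submission
  imports Defs
begin

text \<open>Edge-adjacent datasets differ in one entry (i0, j0) of the adjacency matrix. In
  Z = A W + 1 b^T + N this changes only row i0, by the row W_j0, which has norm 1. Hence,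
  conditionally on the weights (W, b), the noise producing Z under one dataset is the noise of
  the other one shifted by a vector c of Euclidean norm 1, and the joint law of ((W, b), noise)
  under D has density (dP_W / dQ_W)(W, b) * exp(<c, y>/s^2 - |c|^2/(2 s^2)) with respect to
  the one under D'. Its \<alpha>-th moment factorises into the Renyi moment of the weights and the
  Gaussian factor exp(\<alpha> (\<alpha> - 1) / (2 s^2)). Everything the mechanism releases is a
  post-processing of ((W, b), noise), and the data processing inequality for Renyi moments,
  obtained from Young's inequality, carries the bound over to the output.\<close>

section \<open>Renyi moments\<close>

definition renyi_moment :: "real \<Rightarrow> 'a measure \<Rightarrow> 'a measure \<Rightarrow> ennreal" where
  "renyi_moment \<alpha> P Q = (\<integral>\<^sup>+ x. ennreal (enn2real (RN_deriv Q P x) powr \<alpha>) \<partial>Q)"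

lemma renyi_div_eq_renyi_moment:
  assumes "sets P = sets Q" and "absolutely_continuous Q P"
  shows "renyi_div \<alpha> P Q = (if renyi_moment \<alpha> P Q = \<top> then \<infinity>
                             else ereal (ln (enn2real (renyi_moment \<alpha> P Q)) / (\<alpha> - 1)))"
  using assms unfolding renyi_div_def renyi_moment_def by (simp add: Let_def)

lemma renyi_div_le_ereal_D:
  assumes "renyi_div \<alpha> P Q \<le> ereal \<gamma>"
  shows "sets P = sets Q" and "absolutely_continuous Q P" and "renyi_moment \<alpha> P Q \<noteq> \<top>"
    and "ln (enn2real (renyi_moment \<alpha> P Q)) / (\<alpha> - 1) \<le> \<gamma>"
proof -
  show PQ: "sets P = sets Q" "absolutely_continuous Q P"
    using assms by (auto simp: renyi_div_def split: if_splits)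
  show "renyi_moment \<alpha> P Q \<noteq> \<top>" "ln (enn2real (renyi_moment \<alpha> P Q)) / (\<alpha> - 1) \<le> \<gamma>"
    using assms by (auto simp: renyi_div_eq_renyi_moment[OF PQ] split: if_splits)
qed

lemma (in prob_space) density_RN_deriv_enn2real:
  assumes "prob_space P" and "sets P = sets M" and "absolutely_continuous M P"
  shows "P = density M (\<lambda>x. ennreal (enn2real (RN_deriv M P x)))"
proof -
  interpret P: prob_space P by fact
  have "AE x in M. RN_deriv M P x \<noteq> \<infinity>"
    using assms by (intro RN_deriv_finite) (auto simp: P.sigma_finite_measure)
  then have "density M (RN_deriv M P) = density M (\<lambda>x. ennreal (enn2real (RN_deriv M P x)))"
    by (intro density_cong) (auto simp: ennreal_enn2real_if)
  then show ?thesis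
    using density_RN_deriv[OF assms(3)] assms(2) by simp
qed

lemma renyi_moment_nonzero:
  assumes "prob_space P" and "prob_space Q" and "sets P = sets Q" and "absolutely_continuous Q P"
  shows "renyi_moment \<alpha> P Q \<noteq> 0"
proof
  interpret P: prob_space P by fact
  interpret Q: prob_space Q by fact
  assume "renyi_moment \<alpha> P Q = 0"
  then have "AE x in Q. enn2real (RN_deriv Q P x) powr \<alpha> = 0"
    by (subst (asm) renyi_moment_def, subst (asm) nn_integral_0_iff_AE) auto
  then have "AE x in Q. ennreal (enn2real (RN_deriv Q P x)) = 0"
    by eventually_elim simp
  then have "emeasure (density Q (\<lambda>x. ennreal (enn2real (RN_deriv Q P x)))) (space Q) = 0"
    by (simp add: emeasure_density nn_integral_0_iff_AE)
  then show False
    using Q.density_RN_deriv_enn2real[OF assms(1,3,4)] sets_eq_imp_space_eq[OF assms(3)]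
      P.emeasure_space_1 by simp
qed

lemma renyi_div_le_of_renyi_moment_le:
  assumes "\<alpha> > 1" and "prob_space P" and "prob_space Q"
    and "sets P = sets Q" and "absolutely_continuous Q P"
    and "renyi_div \<alpha> P' Q' \<le> ereal \<gamma>"
    and le: "renyi_moment \<alpha> P Q \<le> ennreal (exp ((\<alpha> - 1) * \<delta>)) * renyi_moment \<alpha> P' Q'"
  shows "renyi_div \<alpha> P Q \<le> ereal (\<gamma> + \<delta>)"
proof -
  define I I' where "I = renyi_moment \<alpha> P Q" and "I' = renyi_moment \<alpha> P' Q'"
  have I'_fin: "I' \<noteq> \<top>" and I'_le: "ln (enn2real I') / (\<alpha> - 1) \<le> \<gamma>"
    using renyi_div_le_ereal_D[OF assms(6)] by (simp_all add: I'_def)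
  have bound_fin: "ennreal (exp ((\<alpha> - 1) * \<delta>)) * I' < \<top>"
    using I'_fin by (simp add: ennreal_mult_less_top top.not_eq_extremum)
  have "enn2real I \<le> enn2real (ennreal (exp ((\<alpha> - 1) * \<delta>)) * I')"
    using enn2real_mono[OF le bound_fin[unfolded I'_def]] by (simp add: I_def I'_def)
  then have I_le: "enn2real I \<le> exp ((\<alpha> - 1) * \<delta>) * enn2real I'"
    by (simp add: enn2real_mult)
  have I_fin: "I \<noteq> \<top>"
    using le bound_fin by (auto simp: I_def I'_def top_unique)
  have I_pos: "enn2real I > 0"
    using renyi_moment_nonzero[OF assms(2-5)] I_fin
    by (simp add: I_def enn2real_positive_iff top.not_eq_extremum zero_less_iff_neq_zero)
  then have I'_pos: "enn2real I' > 0"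
    using I_le enn2real_nonneg[of I] enn2real_nonneg[of I'] by (cases "enn2real I' = 0") (auto simp: less_le)
  have "ln (enn2real I) \<le> (\<alpha> - 1) * \<delta> + ln (enn2real I')"
    using ln_mono[OF I_le I_pos] I'_pos by (simp add: ln_mult)
  then have "ln (enn2real I) / (\<alpha> - 1) \<le> ((\<alpha> - 1) * \<delta> + ln (enn2real I')) / (\<alpha> - 1)"
    using assms(1) by (intro divide_right_mono) auto
  also have "\<dots> = \<delta> + ln (enn2real I') / (\<alpha> - 1)"
    using assms(1) by (simp add: add_divide_distrib)
  finally have "ln (enn2real I) / (\<alpha> - 1) \<le> \<delta> + ln (enn2real I') / (\<alpha> - 1)" .
  then show ?thesis
    using I'_le I_fin
    by (simp add: renyi_div_eq_renyi_moment[OF assms(4,5)] I_def[symmetric])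
qed

section \<open>Data processing inequality for Renyi moments\<close>

lemma young_inequality_powr:
  fixes a b \<alpha> :: real
  assumes "\<alpha> > 1" and "a \<ge> 0" and "b \<ge> 0"
  shows "a * b powr (\<alpha> - 1) \<le> 1 / \<alpha> * a powr \<alpha> + (1 - 1 / \<alpha>) * b powr \<alpha>"
proof -
  define q where "q = \<alpha> / (\<alpha> - 1)"
  have "q > 1" and "1 / \<alpha> + 1 / q = 1"
    using assms(1) by (auto simp: q_def field_simps)
  from Youngs_inequality[OF assms(1) this assms(2), of "b powr (\<alpha> - 1)"]
  have "a * b powr (\<alpha> - 1) \<le> a powr \<alpha> / \<alpha> + (b powr (\<alpha> - 1)) powr q / q"
    by simp
  moreover have "(\<alpha> - 1) * q = \<alpha>" and "1 / q = 1 - 1 / \<alpha>"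
    using assms(1) by (auto simp: q_def field_simps)
  then have "(b powr (\<alpha> - 1)) powr q / q = (1 - 1 / \<alpha>) * b powr \<alpha>"
    by (metis powr_powr divide_inverse inverse_eq_divide mult.commute)
  ultimately show ?thesis by simp
qed

lemma ennreal_le_of_le_convex_combination:
  fixes x F :: ennreal and t :: real
  assumes "x \<noteq> \<top>" and "0 < t" and "t \<le> 1"
    and le: "x \<le> ennreal t * F + ennreal (1 - t) * x"
  shows "x \<le> F"
proof (cases "F = \<top>")
  case False
  obtain a b where a: "x = ennreal a" "a \<ge> 0" and b: "F = ennreal b" "b \<ge> 0"
    using assms(1) False by (cases x; cases F) auto
  have "ennreal t * F + ennreal (1 - t) * x = ennreal (t * b + (1 - t) * a)"
    using assms(2,3) a b by (simp add: ennreal_mult ennreal_plus)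
  with le have "ennreal a \<le> ennreal (t * b + (1 - t) * a)"
    by (simp only: a(1))
  then have "a \<le> t * b + (1 - t) * a"
    using assms(2,3) a(2) b(2) by (subst (asm) ennreal_le_iff) auto
  then have "t * a \<le> t * b" by (simp add: algebra_simps)
  then show ?thesis using a b assms(2) by simp
qed simp

lemma nn_integral_powr_eq_SUP_min:
  fixes g :: "'a \<Rightarrow> real"
  assumes [measurable]: "g \<in> borel_measurable M" and g0: "\<And>x. 0 \<le> g x" and "\<alpha> > 0"
  shows "(\<integral>\<^sup>+ x. ennreal (g x powr \<alpha>) \<partial>M) = (SUP n. \<integral>\<^sup>+ x. ennreal (min (g x) (real n) powr \<alpha>) \<partial>M)"
proof -
  have "ennreal (g x powr \<alpha>) = (SUP n. ennreal (min (g x) (real n) powr \<alpha>))" for x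
  proof (rule antisym)
    have "min (g x) (real (nat \<lceil>g x\<rceil>)) = g x" by (simp add: real_nat_ceiling_ge)
    then show "ennreal (g x powr \<alpha>) \<le> (SUP n. ennreal (min (g x) (real n) powr \<alpha>))"
      by (metis SUP_upper UNIV_I)
    show "(SUP n. ennreal (min (g x) (real n) powr \<alpha>)) \<le> ennreal (g x powr \<alpha>)"
      using assms(3) g0[of x] by (intro SUP_least ennreal_leI powr_mono2) simp_all
  qed
  moreover have "incseq (\<lambda>n x. ennreal (min (g x) (real n) powr \<alpha>))"
    using assms(3) g0 by (auto simp: incseq_def le_fun_def intro!: ennreal_leI powr_mono2)
  ultimately show ?thesis
    by (simp add: nn_integral_monotone_convergence_SUP)
qed

lemma bind_density_absolutely_continuous:
  fixes f :: "'a \<Rightarrow> real"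
  assumes "prob_space M" and L: "L \<in> M \<rightarrow>\<^sub>M prob_algebra T"
    and f[measurable]: "f \<in> borel_measurable M"
  shows "sets (density M f \<bind> L) = sets (M \<bind> L)"
    and "absolutely_continuous (M \<bind> L) (density M f \<bind> L)"
proof -
  interpret prob_space M by fact
  have Ls: "L \<in> M \<rightarrow>\<^sub>M subprob_algebra T" using L by (rule measurable_prob_algebraD)
  then have Ld: "L \<in> density M f \<rightarrow>\<^sub>M subprob_algebra T"
    by (simp cong: measurable_cong_sets)
  have sets: "sets (density M f \<bind> L) = sets T" "sets (M \<bind> L) = sets T"
    using sets_bind_measurable[OF Ld] sets_bind_measurable[OF Ls] by (simp_all add: not_empty)
  then show "sets (density M f \<bind> L) = sets (M \<bind> L)" by simp
  show "absolutely_continuous (M \<bind> L) (density M f \<bind> L)"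
    unfolding absolutely_continuous_def
  proof
    fix A assume A: "A \<in> null_sets (M \<bind> L)"
    then have [measurable]: "A \<in> sets T" using sets by auto
    have [measurable]: "(\<lambda>x. emeasure (L x) A) \<in> borel_measurable M"
      using measurable_emeasure_kernel[OF Ls] by simp
    have "(\<integral>\<^sup>+x. emeasure (L x) A \<partial>M) = 0"
      using A emeasure_bind[OF not_empty Ls, of A] by auto
    then have "AE x in M. emeasure (L x) A = 0"
      by (simp add: nn_integral_0_iff_AE)
    then have "(\<integral>\<^sup>+x. ennreal (f x) * emeasure (L x) A \<partial>M) = 0"
      by (subst nn_integral_0_iff_AE) auto
    moreover have "emeasure (density M f \<bind> L) A = (\<integral>\<^sup>+x. ennreal (f x) * emeasure (L x) A \<partial>M)"
      by (subst emeasure_bind[OF _ Ld]) (auto simp: not_empty nn_integral_density)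
    ultimately show "A \<in> null_sets (density M f \<bind> L)" using sets by auto
  qed
qed

lemma nn_integral_bind_density_young:
  fixes f u :: "_ \<Rightarrow> real"
  assumes "\<alpha> > 1" and "prob_space M" and L: "L \<in> M \<rightarrow>\<^sub>M prob_algebra T"
    and [measurable]: "f \<in> borel_measurable M" and f0: "\<And>x. 0 \<le> f x"
    and [measurable]: "u \<in> borel_measurable T" and u0: "\<And>y. 0 \<le> u y"
  shows "(\<integral>\<^sup>+ y. ennreal (u y powr (\<alpha> - 1)) \<partial>(density M f \<bind> L))
     \<le> ennreal (1 / \<alpha>) * (\<integral>\<^sup>+ x. ennreal (f x powr \<alpha>) \<partial>M)
       + ennreal (1 - 1 / \<alpha>) * (\<integral>\<^sup>+ y. ennreal (u y powr \<alpha>) \<partial>(M \<bind> L))"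
proof -
  interpret prob_space M by fact
  have Ls[measurable]: "L \<in> M \<rightarrow>\<^sub>M subprob_algebra T" using L by (rule measurable_prob_algebraD)
  have Ld: "L \<in> density M f \<rightarrow>\<^sub>M subprob_algebra T"
    using Ls by (simp cong: measurable_cong_sets)
  have Lx: "prob_space (L x)" "sets (L x) = sets T" if "x \<in> space M" for x
    using measurable_space[OF L that] by (simp_all add: space_prob_algebra)
  have c: "0 \<le> 1 / \<alpha>" "0 \<le> 1 - 1 / \<alpha>" using assms(1) by auto
  have "(\<integral>\<^sup>+ y. ennreal (u y powr (\<alpha> - 1)) \<partial>(density M f \<bind> L))
      = (\<integral>\<^sup>+ x. ennreal (f x) * (\<integral>\<^sup>+ y. ennreal (u y powr (\<alpha> - 1)) \<partial>L x) \<partial>M)"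
    by (subst nn_integral_bind[OF _ Ld], measurable)
       (auto intro!: nn_integral_density nn_integral_measurable_subprob_algebra2[OF _ Ls])
  also have "\<dots> = (\<integral>\<^sup>+ x. \<integral>\<^sup>+ y. ennreal (f x * u y powr (\<alpha> - 1)) \<partial>L x \<partial>M)"
    by (intro nn_integral_cong, subst nn_integral_cmult[symmetric])
       (auto simp: ennreal_mult' f0 Lx cong: measurable_cong_sets)
  also have "\<dots> \<le> (\<integral>\<^sup>+ x. \<integral>\<^sup>+ y. ennreal (1 / \<alpha>) * ennreal (f x powr \<alpha>)
                                   + ennreal (1 - 1 / \<alpha>) * ennreal (u y powr \<alpha>) \<partial>L x \<partial>M)"
  proof (intro nn_integral_mono)
    fix x y
    have "ennreal (1 / \<alpha>) * ennreal (f x powr \<alpha>) + ennreal (1 - 1 / \<alpha>) * ennreal (u y powr \<alpha>)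
        = ennreal (1 / \<alpha> * f x powr \<alpha> + (1 - 1 / \<alpha>) * u y powr \<alpha>)"
      using c by (simp only: ennreal_mult[symmetric] ennreal_plus[symmetric] mult_nonneg_nonneg powr_ge_zero)
    then show "ennreal (f x * u y powr (\<alpha> - 1))
        \<le> ennreal (1 / \<alpha>) * ennreal (f x powr \<alpha>) + ennreal (1 - 1 / \<alpha>) * ennreal (u y powr \<alpha>)"
      using young_inequality_powr[OF assms(1) f0 u0] by (simp only: ennreal_leI)
  qed
  also have "\<dots> = (\<integral>\<^sup>+ x. ennreal (1 / \<alpha>) * ennreal (f x powr \<alpha>)
                         + ennreal (1 - 1 / \<alpha>) * (\<integral>\<^sup>+ y. ennreal (u y powr \<alpha>) \<partial>L x) \<partial>M)"
    by (intro nn_integral_cong, subst nn_integral_add)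
       (auto simp: Lx prob_space.emeasure_space_1 nn_integral_cmult cong: measurable_cong_sets)
  also have "\<dots> = ennreal (1 / \<alpha>) * (\<integral>\<^sup>+ x. ennreal (f x powr \<alpha>) \<partial>M)
       + ennreal (1 - 1 / \<alpha>) * (\<integral>\<^sup>+ x. \<integral>\<^sup>+ y. ennreal (u y powr \<alpha>) \<partial>L x \<partial>M)"
    by (subst nn_integral_add)
       (auto simp: nn_integral_cmult intro!: nn_integral_measurable_subprob_algebra2[OF _ Ls])
  also have "(\<integral>\<^sup>+ x. \<integral>\<^sup>+ y. ennreal (u y powr \<alpha>) \<partial>L x \<partial>M) = (\<integral>\<^sup>+ y. ennreal (u y powr \<alpha>) \<partial>(M \<bind> L))"
    by (rule nn_integral_bind[OF _ Ls, symmetric]) measurable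
  finally show ?thesis .
qed

lemma nn_integral_powr_le_density_powr:
  fixes u g :: "'a \<Rightarrow> real"
  assumes [measurable]: "u \<in> borel_measurable M" "g \<in> borel_measurable M"
    and u0: "\<And>y. 0 \<le> u y" and ug: "\<And>y. u y \<le> g y"
  shows "(\<integral>\<^sup>+ y. ennreal (u y powr \<alpha>) \<partial>M) \<le> (\<integral>\<^sup>+ y. ennreal (u y powr (\<alpha> - 1)) \<partial>density M g)"
proof -
  have "ennreal (u y powr \<alpha>) \<le> ennreal (g y) * ennreal (u y powr (\<alpha> - 1))" for y
  proof -
    have "u y powr \<alpha> = u y * u y powr (\<alpha> - 1)"
      using u0[of y] by (cases "u y = 0") (simp_all add: powr_mult_base)
    also have "\<dots> \<le> g y * u y powr (\<alpha> - 1)" by (intro mult_right_mono ug) simp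
    finally show ?thesis
      using u0[of y] ug[of y] by (simp add: ennreal_mult'[symmetric])
  qed
  then show ?thesis
    by (subst nn_integral_density) (auto intro!: nn_integral_mono)
qed

lemma renyi_moment_bind_density_le:
  fixes f :: "'a \<Rightarrow> real"
  assumes "\<alpha> > 1" and "prob_space M" and L: "L \<in> M \<rightarrow>\<^sub>M prob_algebra T"
    and [measurable]: "f \<in> borel_measurable M" and f0: "\<And>x. 0 \<le> f x"
    and "prob_space (density M f \<bind> L)"
  shows "renyi_moment \<alpha> (density M f \<bind> L) (M \<bind> L) \<le> (\<integral>\<^sup>+ x. ennreal (f x powr \<alpha>) \<partial>M)"
proof -
  define P Q where "P = density M f \<bind> L" and "Q = M \<bind> L"
  define g where "g y = enn2real (RN_deriv Q P y)" for y
  define F where "F = (\<integral>\<^sup>+ x. ennreal (f x powr \<alpha>) \<partial>M)"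
  interpret prob_space M by fact
  interpret Q: prob_space Q
    unfolding Q_def by (rule prob_space_bind'[OF _ L]) (simp add: space_prob_algebra prob_space_axioms)
  have sPQ: "sets P = sets Q" and ac: "absolutely_continuous Q P"
    using bind_density_absolutely_continuous[OF assms(2) L assms(4)] by (simp_all add: P_def Q_def)
  have sQ: "sets Q = sets T"
    unfolding Q_def by (rule sets_bind_measurable[OF measurable_prob_algebraD[OF L]]) (simp add: not_empty)
  have P: "P = density Q g"
    unfolding g_def using assms(6) by (intro Q.density_RN_deriv_enn2real sPQ ac) (simp add: P_def)
  have gQ: "g \<in> borel_measurable Q" unfolding g_def by measurable
  then have [measurable]: "g \<in> borel_measurable T" using sQ by (simp cong: measurable_cong_sets)
  txt \<open>Truncating the density keeps the moments finite, so that the Young bound can be absorbed.\<close>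
  have "(\<integral>\<^sup>+ y. ennreal (min (g y) (real n) powr \<alpha>) \<partial>Q) \<le> F" for n
  proof (rule ennreal_le_of_le_convex_combination)
    define u where "u y = min (g y) (real n)" for y
    have u0: "0 \<le> u y" and ug: "u y \<le> g y" for y by (simp_all add: u_def g_def)
    have [measurable]: "u \<in> borel_measurable T" unfolding u_def by measurable
    have "(\<integral>\<^sup>+ y. ennreal (min (g y) (real n) powr \<alpha>) \<partial>Q) \<le> ennreal (real n powr \<alpha>)"
      using assms(1) by (intro Q.nn_integral_le_const) (auto intro!: ennreal_leI powr_mono2 simp: g_def)
    then show "(\<integral>\<^sup>+ y. ennreal (min (g y) (real n) powr \<alpha>) \<partial>Q) \<noteq> \<top>"
      by (metis ennreal_neq_top neq_top_trans)
    have "(\<integral>\<^sup>+ y. ennreal (u y powr \<alpha>) \<partial>Q) \<le> (\<integral>\<^sup>+ y. ennreal (u y powr (\<alpha> - 1)) \<partial>P)"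
      unfolding P using u0 ug by (intro nn_integral_powr_le_density_powr) (auto simp: sQ cong: measurable_cong_sets)
    also have "\<dots> \<le> ennreal (1 / \<alpha>) * F + ennreal (1 - 1 / \<alpha>) * (\<integral>\<^sup>+ y. ennreal (u y powr \<alpha>) \<partial>Q)"
      unfolding P_def Q_def F_def by (rule nn_integral_bind_density_young[OF assms(1-5)]) (simp_all add: u0)
    finally show "(\<integral>\<^sup>+ y. ennreal (min (g y) (real n) powr \<alpha>) \<partial>Q)
        \<le> ennreal (1 / \<alpha>) * F + ennreal (1 - 1 / \<alpha>) * (\<integral>\<^sup>+ y. ennreal (min (g y) (real n) powr \<alpha>) \<partial>Q)"
      by (simp add: u_def)
  qed (use assms(1) in auto)
  then have "(\<integral>\<^sup>+ y. ennreal (g y powr \<alpha>) \<partial>Q) \<le> F"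
    using assms(1) by (subst nn_integral_powr_eq_SUP_min[OF gQ]) (auto simp: g_def intro!: SUP_least)
  then show ?thesis by (simp add: renyi_moment_def P_def Q_def g_def F_def)
qed

section \<open>Shifted Gaussian noise\<close>

lemma distr_PiM_componentwise:
  fixes M M' :: "'i::finite \<Rightarrow> 'a measure"
  assumes "\<And>i. prob_space (M i)" and "\<And>i. prob_space (M' i)"
    and T: "\<And>i. T i \<in> M i \<rightarrow>\<^sub>M M' i"
  shows "distr (PiM UNIV M) (PiM UNIV M') (\<lambda>x i. T i (x i)) = PiM UNIV (\<lambda>i. distr (M i) (M' i) (T i))"
proof -
  interpret M: product_prob_space M by (intro product_prob_spaceI) fact
  interpret D: product_prob_space "\<lambda>i. distr (M i) (M' i) (T i)"
    by (intro product_prob_spaceI prob_space.prob_space_distr assms)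
  have "(\<lambda>x. T i (x i)) \<in> PiM UNIV M \<rightarrow>\<^sub>M M' i" for i
    by (rule measurable_compose[OF _ T]) simp
  then have T': "(\<lambda>x i. T i (x i)) \<in> PiM UNIV M \<rightarrow>\<^sub>M PiM UNIV M'"
    by (rule measurable_PiM_single') (auto intro!: measurable_space[OF T] simp: space_PiM PiE_iff)
  show ?thesis
  proof (rule D.PiM_eqI)
    fix A assume A: "\<And>i. i \<in> UNIV \<Longrightarrow> A i \<in> sets (distr (M i) (M' i) (T i))"
    have "(\<lambda>x i. T i (x i)) -` PiE UNIV A \<inter> space (PiM UNIV M) = PiE UNIV (\<lambda>i. T i -` A i \<inter> space (M i))"
      by (auto simp: space_PiM PiE_def Pi_def)
    moreover have "T i -` A i \<inter> space (M i) \<in> sets (M i)" for i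
      using A measurable_sets[OF T] by simp
    ultimately show "emeasure (distr (PiM UNIV M) (PiM UNIV M') (\<lambda>x i. T i (x i))) (PiE UNIV A)
        = (\<Prod>i\<in>UNIV. emeasure (distr (M i) (M' i) (T i)) (A i))"
      using A by (simp add: emeasure_distr[OF T'] emeasure_distr[OF T] M.emeasure_PiM sets_PiM_I_finite)
  next
    show "sets (distr (PiM UNIV M) (PiM UNIV M') (\<lambda>x i. T i (x i))) = sets (PiM UNIV (\<lambda>i. distr (M i) (M' i) (T i)))"
      by (subst sets_distr, rule sets_PiM_cong) simp_all
  qed simp
qed

lemma density_PiM_prod:
  fixes M :: "'i::finite \<Rightarrow> 'a measure"
  assumes "\<And>i. prob_space (M i)" and "\<And>i. prob_space (density (M i) (f i))"
    and [measurable]: "\<And>i. f i \<in> borel_measurable (M i)"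
  shows "density (PiM UNIV M) (\<lambda>x. \<Prod>i\<in>UNIV. f i (x i)) = PiM UNIV (\<lambda>i. density (M i) (f i))"
proof -
  interpret M: product_prob_space M by (intro product_prob_spaceI) fact
  interpret D: product_prob_space "\<lambda>i. density (M i) (f i)" by (intro product_prob_spaceI) fact
  show ?thesis
  proof (rule D.PiM_eqI)
    fix A assume A: "\<And>i. i \<in> UNIV \<Longrightarrow> A i \<in> sets (density (M i) (f i))"
    have "(\<integral>\<^sup>+ x. (\<Prod>i\<in>UNIV. f i (x i)) * indicator (PiE UNIV A) x \<partial>PiM UNIV M)
        = (\<integral>\<^sup>+ x. (\<Prod>i\<in>UNIV. f i (x i) * indicator (A i) (x i)) \<partial>PiM UNIV M)"
      by (intro nn_integral_cong) (auto simp: prod.distrib indicator_def PiE_def Pi_def)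
    also have "\<dots> = (\<Prod>i\<in>UNIV. \<integral>\<^sup>+ x. f i x * indicator (A i) x \<partial>M i)"
      using A by (intro M.product_nn_integral_prod) auto
    finally show "emeasure (density (PiM UNIV M) (\<lambda>x. \<Prod>i\<in>UNIV. f i (x i))) (PiE UNIV A)
        = (\<Prod>i\<in>UNIV. emeasure (density (M i) (f i)) (A i))"
      using A by (simp add: emeasure_density sets_PiM_I_finite)
  next
    show "sets (density (PiM UNIV M) (\<lambda>x. \<Prod>i\<in>UNIV. f i (x i))) = sets (PiM UNIV (\<lambda>i. density (M i) (f i)))"
      by (subst sets_density, rule sets_PiM_cong) simp_all
  qed simp
qed

abbreviation centered_normal :: "real \<Rightarrow> real measure" where
  "centered_normal s \<equiv> density lborel (\<lambda>x. ennreal (normal_density 0 s x))"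

definition gauss_ratio :: "real \<Rightarrow> real \<Rightarrow> real \<Rightarrow> real" where
  "gauss_ratio s c x = exp ((2 * c * x - c\<^sup>2) / (2 * s\<^sup>2))"

lemma gauss_ratio_pos: "gauss_ratio s c x > 0"
  by (simp add: gauss_ratio_def)

lemma gauss_ratio_measurable[measurable (raw)]:
  assumes [measurable]: "f \<in> borel_measurable M" "g \<in> borel_measurable M"
  shows "(\<lambda>x. gauss_ratio s (f x) (g x)) \<in> borel_measurable M"
  unfolding gauss_ratio_def by measurable

lemma normal_density_diff: "normal_density 0 s (x - c) = normal_density 0 s x * gauss_ratio s c x"
proof -
  have "-(x - c)\<^sup>2 / (2 * s\<^sup>2) = -x\<^sup>2 / (2 * s\<^sup>2) + (2 * c * x - c\<^sup>2) / (2 * s\<^sup>2)"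
    by (simp add: power2_eq_square add_divide_distrib[symmetric] diff_divide_distrib[symmetric] algebra_simps)
  then show ?thesis
    unfolding normal_density_def gauss_ratio_def by (simp add: mult_exp_exp algebra_simps)
qed

lemma nn_integral_centered_normal_shift:
  assumes [measurable]: "F \<in> borel_measurable borel"
  shows "(\<integral>\<^sup>+ x. F (x + c) \<partial>centered_normal s) = (\<integral>\<^sup>+ x. ennreal (gauss_ratio s c x) * F x \<partial>centered_normal s)"
proof -
  have "(\<integral>\<^sup>+ x. F (x + c) \<partial>centered_normal s) = (\<integral>\<^sup>+ x. ennreal (normal_density 0 s ((c + x) - c)) * F (c + x) \<partial>lborel)"
    by (subst nn_integral_density) (auto simp: add.commute)
  also have "\<dots> = (\<integral>\<^sup>+ y. ennreal (normal_density 0 s (y - c)) * F y \<partial>lborel)"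
    using nn_integral_distr[of "(+) c" lborel borel "\<lambda>y. ennreal (normal_density 0 s (y - c)) * F y"]
    by (simp add: lborel_distr_plus)
  also have "\<dots> = (\<integral>\<^sup>+ y. ennreal (normal_density 0 s y) * (ennreal (gauss_ratio s c y) * F y) \<partial>lborel)"
    by (intro nn_integral_cong) (simp add: normal_density_diff ennreal_mult' mult.assoc gauss_ratio_pos less_imp_le)
  also have "\<dots> = (\<integral>\<^sup>+ x. ennreal (gauss_ratio s c x) * F x \<partial>centered_normal s)"
    by (subst nn_integral_density) auto
  finally show ?thesis .
qed

lemma distr_centered_normal_shift:
  "distr (centered_normal s) borel (\<lambda>x. x + c) = density (centered_normal s) (\<lambda>x. ennreal (gauss_ratio s c x))"
proof (rule measure_eqI)
  fix A assume "A \<in> sets (distr (centered_normal s) borel (\<lambda>x. x + c))"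
  then have [measurable]: "A \<in> sets borel" by simp
  have "emeasure (distr (centered_normal s) borel (\<lambda>x. x + c)) A
      = (\<integral>\<^sup>+ y. indicator A y \<partial>distr (centered_normal s) borel (\<lambda>x. x + c))"
    by simp
  also have "\<dots> = (\<integral>\<^sup>+ x. indicator A (x + c) \<partial>centered_normal s)"
    by (rule nn_integral_distr) auto
  also have "\<dots> = emeasure (density (centered_normal s) (\<lambda>x. ennreal (gauss_ratio s c x))) A"
    by (subst nn_integral_centered_normal_shift)
       (auto simp: emeasure_density mult.commute intro!: nn_integral_cong)
  finally show "emeasure (distr (centered_normal s) borel (\<lambda>x. x + c)) A
      = emeasure (density (centered_normal s) (\<lambda>x. ennreal (gauss_ratio s c x))) A" .
qed simp

lemma gauss_ratio_powr:
  "gauss_ratio s c x powr a = gauss_ratio s (a * c) x * exp (a * (a - 1) * c\<^sup>2 / (2 * s\<^sup>2))"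
proof -
  have "a * ((2 * c * x - c\<^sup>2) / (2 * s\<^sup>2))
      = (2 * (a * c) * x - (a * c)\<^sup>2) / (2 * s\<^sup>2) + a * (a - 1) * c\<^sup>2 / (2 * s\<^sup>2)"
    by (simp add: power2_eq_square add_divide_distrib[symmetric] diff_divide_distrib[symmetric] algebra_simps)
  then show ?thesis unfolding gauss_ratio_def by (simp add: powr_def exp_add[symmetric])
qed

lemma nn_integral_gauss_ratio_powr:
  assumes "s > 0"
  shows "(\<integral>\<^sup>+ x. ennreal (gauss_ratio s c x powr a) \<partial>centered_normal s)
       = ennreal (exp (a * (a - 1) * c\<^sup>2 / (2 * s\<^sup>2)))"
proof -
  interpret prob_space "centered_normal s" using prob_space_normal_density[OF assms] by simp
  have "(\<integral>\<^sup>+ x. ennreal (gauss_ratio s c x powr a) \<partial>centered_normal s)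
      = ennreal (exp (a * (a - 1) * c\<^sup>2 / (2 * s\<^sup>2))) * (\<integral>\<^sup>+ x. ennreal (gauss_ratio s (a * c) x) * 1 \<partial>centered_normal s)"
    by (subst nn_integral_cmult[symmetric])
       (auto intro!: nn_integral_cong simp: gauss_ratio_powr ennreal_mult' gauss_ratio_pos less_imp_le mult.commute)
  also have "(\<integral>\<^sup>+ x. ennreal (gauss_ratio s (a * c) x) * 1 \<partial>centered_normal s) = 1"
    using nn_integral_centered_normal_shift[where F="\<lambda>_. 1" and c="a * c" and s=s]
    using emeasure_space_1 by simp
  finally show ?thesis by simp
qed

definition gauss_vec :: "real \<Rightarrow> ('p::finite \<Rightarrow> real) measure" where
  "gauss_vec s = PiM UNIV (\<lambda>_. centered_normal s)"

definition gauss_ratio_vec :: "real \<Rightarrow> ('p::finite \<Rightarrow> real) \<Rightarrow> ('p \<Rightarrow> real) \<Rightarrow> real" where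
  "gauss_ratio_vec s c y = (\<Prod>p\<in>UNIV. gauss_ratio s (c p) (y p))"

lemma gauss_ratio_vec_pos: "gauss_ratio_vec s c y > 0"
  unfolding gauss_ratio_vec_def by (simp add: gauss_ratio_pos prod_pos)

lemma gauss_ratio_vec_zero: "gauss_ratio_vec s (\<lambda>_. 0) y = 1"
  by (simp add: gauss_ratio_vec_def gauss_ratio_def)

lemma gauss_ratio_vec_measurable[measurable (raw)]:
  assumes [measurable]: "\<And>p. (\<lambda>x. f x p) \<in> borel_measurable M" "\<And>p. (\<lambda>x. g x p) \<in> borel_measurable M"
  shows "(\<lambda>x. gauss_ratio_vec s (f x) (g x)) \<in> borel_measurable M"
  unfolding gauss_ratio_vec_def by measurable

lemma sets_gauss_vec[simp, measurable_cong]: "sets (gauss_vec s) = sets (PiM UNIV (\<lambda>_::'p::finite. borel))"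
  unfolding gauss_vec_def by (intro sets_PiM_cong) auto

lemma prob_space_gauss_vec:
  assumes "s > 0" shows "prob_space (gauss_vec s :: ('p::finite \<Rightarrow> real) measure)"
proof -
  interpret product_prob_space "\<lambda>_::'p. centered_normal s"
    by (rule product_prob_spaceI) (use prob_space_normal_density[OF assms] in simp)
  show ?thesis unfolding gauss_vec_def by (rule prob_space_PiM) (use prob_space_normal_density[OF assms] in simp)
qed

lemma distr_gauss_vec_shift:
  fixes c :: "'p::finite \<Rightarrow> real"
  assumes "s > 0"
  shows "distr (gauss_vec s) (gauss_vec s) (\<lambda>y p. y p + c p) = density (gauss_vec s) (gauss_ratio_vec s c)"
proof -
  have N: "prob_space (centered_normal s)" using prob_space_normal_density[OF assms] by simp
  have shift: "distr (centered_normal s) (centered_normal s) (\<lambda>x. x + c p)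
      = density (centered_normal s) (\<lambda>x. ennreal (gauss_ratio s (c p) x))" for p
    using distr_centered_normal_shift[of s "c p"] by (simp cong: distr_cong)
  have "distr (gauss_vec s) (gauss_vec s) (\<lambda>y p. y p + c p)
      = PiM UNIV (\<lambda>p. density (centered_normal s) (\<lambda>x. ennreal (gauss_ratio s (c p) x)))"
    unfolding gauss_vec_def shift[symmetric] by (rule distr_PiM_componentwise[OF N N]) simp
  also have "\<dots> = density (gauss_vec s) (\<lambda>y. \<Prod>p\<in>UNIV. ennreal (gauss_ratio s (c p) (y p)))"
    unfolding gauss_vec_def using N prob_space.prob_space_distr[OF N, of "\<lambda>x. x + c p" "centered_normal s" for p]
    by (intro density_PiM_prod[symmetric]) (simp_all add: shift)
  also have "\<dots> = density (gauss_vec s) (gauss_ratio_vec s c)"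
    by (simp add: gauss_ratio_vec_def prod_ennreal gauss_ratio_pos less_imp_le)
  finally show ?thesis .
qed

lemma nn_integral_gauss_vec_shift:
  assumes "s > 0" and [measurable]: "F \<in> borel_measurable (gauss_vec s)"
  shows "(\<integral>\<^sup>+ y. F (\<lambda>p. y p + c p) \<partial>gauss_vec s)
       = (\<integral>\<^sup>+ y. ennreal (gauss_ratio_vec s c y) * F (y :: 'p::finite \<Rightarrow> real) \<partial>gauss_vec s)"
proof -
  have [measurable]: "(\<lambda>y p. y p + c p) \<in> gauss_vec s \<rightarrow>\<^sub>M gauss_vec s"
    unfolding measurable_cong_sets[OF sets_gauss_vec sets_gauss_vec]
    by (rule measurable_PiM_single') (auto simp: space_PiM)
  show ?thesis
    using nn_integral_distr[of "\<lambda>y p. y p + c p" "gauss_vec s" "gauss_vec s" F]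
    by (simp add: distr_gauss_vec_shift[OF assms(1)] nn_integral_density)
qed

lemma nn_integral_gauss_ratio_vec_powr:
  assumes "s > 0"
  shows "(\<integral>\<^sup>+ y. ennreal (gauss_ratio_vec s c y powr a) \<partial>gauss_vec s)
       = ennreal (exp (a * (a - 1) * (\<Sum>p\<in>UNIV. (c p)\<^sup>2) / (2 * s\<^sup>2)))"
proof -
  interpret N: product_prob_space "\<lambda>_::'p::finite. centered_normal s"
    by (rule product_prob_spaceI) (use prob_space_normal_density[OF assms] in simp)
  have "(\<integral>\<^sup>+ y. ennreal (gauss_ratio_vec s c y powr a) \<partial>gauss_vec s)
      = (\<integral>\<^sup>+ y. (\<Prod>p\<in>UNIV. ennreal (gauss_ratio s (c p) (y p) powr a)) \<partial>gauss_vec s)"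
    unfolding gauss_ratio_vec_def
    by (intro nn_integral_cong) (simp add: prod_powr_distrib gauss_ratio_pos less_imp_le prod_ennreal)
  also have "\<dots> = (\<Prod>p\<in>UNIV. \<integral>\<^sup>+ x. ennreal (gauss_ratio s (c p) x powr a) \<partial>centered_normal s)"
    unfolding gauss_vec_def by (rule N.product_nn_integral_prod) auto
  also have "\<dots> = ennreal (\<Prod>p\<in>UNIV. exp (a * (a - 1) * (c p)\<^sup>2 / (2 * s\<^sup>2)))"
    by (simp add: nn_integral_gauss_ratio_powr[OF assms] prod_ennreal)
  also have "(\<Prod>p\<in>UNIV. exp (a * (a - 1) * (c p)\<^sup>2 / (2 * s\<^sup>2)))
      = exp (a * (a - 1) * (\<Sum>p\<in>UNIV. (c p)\<^sup>2) / (2 * s\<^sup>2))"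
    by (simp add: exp_sum sum_divide_distrib sum_distrib_left)
  finally show ?thesis .
qed

section \<open>Gaussian noise followed by post-processing\<close>

lemma measurable_shift_gauss_vec:
  fixes c :: "'w \<Rightarrow> 'p::finite \<Rightarrow> real"
  assumes [measurable]: "\<And>p. (\<lambda>w. c w p) \<in> borel_measurable W"
  shows "(\<lambda>x. (fst x, \<lambda>p. snd x p + c (fst x) p)) \<in> W \<Otimes>\<^sub>M gauss_vec s \<rightarrow>\<^sub>M W \<Otimes>\<^sub>M gauss_vec s"
proof -
  have "(\<lambda>x. \<lambda>p. snd x p + c (fst x) p) \<in> W \<Otimes>\<^sub>M gauss_vec s \<rightarrow>\<^sub>M PiM UNIV (\<lambda>_. borel)"
    by (rule measurable_PiM_single') (auto simp: space_PiM)
  then show ?thesis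
    by (intro measurable_Pair) (simp_all add: measurable_cong_sets[OF refl sets_gauss_vec])
qed

lemma measurable_bind_gauss_vec_shift:
  fixes K :: "'w \<times> ('p::finite \<Rightarrow> real) \<Rightarrow> 'o measure"
  assumes "s > 0" and K: "K \<in> W \<Otimes>\<^sub>M gauss_vec s \<rightarrow>\<^sub>M prob_algebra Out"
    and c: "\<And>p. (\<lambda>w. c w p) \<in> borel_measurable W"
  shows "(\<lambda>w. gauss_vec s \<bind> (\<lambda>y. K (w, \<lambda>p. y p + c w p))) \<in> W \<rightarrow>\<^sub>M prob_algebra Out"
proof (rule measurable_bind_prob_space2)
  show "(\<lambda>w. gauss_vec s) \<in> W \<rightarrow>\<^sub>M prob_algebra (gauss_vec s)"
    using prob_space_gauss_vec[OF assms(1)] by (intro measurable_const) (simp add: space_prob_algebra)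
  show "(\<lambda>(w, y). K (w, \<lambda>p. y p + c w p)) \<in> W \<Otimes>\<^sub>M gauss_vec s \<rightarrow>\<^sub>M prob_algebra Out"
    using measurable_compose[OF measurable_shift_gauss_vec[OF c] K] by (simp add: case_prod_unfold)
qed

lemma emeasure_bind_gauss_vec_shift:
  fixes K :: "'w \<times> ('p::finite \<Rightarrow> real) \<Rightarrow> 'o measure"
  assumes "s > 0" and K: "K \<in> W \<Otimes>\<^sub>M gauss_vec s \<rightarrow>\<^sub>M subprob_algebra Out"
    and c: "\<And>p. (\<lambda>w. c w p) \<in> borel_measurable W" and w: "w \<in> space W" and E: "E \<in> sets Out"
  shows "emeasure (gauss_vec s \<bind> (\<lambda>y. K (w, \<lambda>p. y p + c w p))) E
       = (\<integral>\<^sup>+ y. ennreal (gauss_ratio_vec s (c w) y) * emeasure (K (w, y)) E \<partial>gauss_vec s)"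
proof -
  interpret N: prob_space "gauss_vec s :: ('p \<Rightarrow> real) measure" by (rule prob_space_gauss_vec) fact
  have w': "(\<lambda>y. (w, y)) \<in> gauss_vec s \<rightarrow>\<^sub>M W \<Otimes>\<^sub>M gauss_vec s" using w by simp
  have "(\<lambda>y. K (w, \<lambda>p. y p + c w p)) \<in> gauss_vec s \<rightarrow>\<^sub>M subprob_algebra Out"
    using measurable_compose[OF measurable_compose[OF w' measurable_shift_gauss_vec[OF c]] K] by simp
  then have "emeasure (gauss_vec s \<bind> (\<lambda>y. K (w, \<lambda>p. y p + c w p))) E
      = (\<integral>\<^sup>+ y. emeasure (K (w, \<lambda>p. y p + c w p)) E \<partial>gauss_vec s)"
    by (rule emeasure_bind[OF N.not_empty _ E])
  also have "\<dots> = (\<integral>\<^sup>+ y. ennreal (gauss_ratio_vec s (c w) y) * emeasure (K (w, y)) E \<partial>gauss_vec s)"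
    using measurable_emeasure_kernel[OF measurable_compose[OF w' K] E]
    by (intro nn_integral_gauss_vec_shift assms(1)) simp
  finally show ?thesis .
qed

lemma bind_gauss_vec_shift:
  fixes K :: "'w \<times> ('p::finite \<Rightarrow> real) \<Rightarrow> 'o measure" and h :: "'w \<Rightarrow> real"
  assumes "s > 0" and "prob_space W" and K: "K \<in> W \<Otimes>\<^sub>M gauss_vec s \<rightarrow>\<^sub>M prob_algebra Out"
    and [measurable]: "h \<in> borel_measurable W" and h0: "\<And>w. 0 \<le> h w"
    and c[measurable]: "\<And>p. (\<lambda>w. c w p) \<in> borel_measurable W"
  shows "density W h \<bind> (\<lambda>w. gauss_vec s \<bind> (\<lambda>y. K (w, \<lambda>p. y p + c w p)))
       = density (W \<Otimes>\<^sub>M gauss_vec s) (\<lambda>x. ennreal (h (fst x) * gauss_ratio_vec s (c (fst x)) (snd x))) \<bind> K"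
    (is "density W h \<bind> ?L = density ?M ?f \<bind> K")
proof -
  interpret W: prob_space W by fact
  interpret N: prob_space "gauss_vec s :: ('p \<Rightarrow> real) measure" by (rule prob_space_gauss_vec) fact
  have Ks: "K \<in> ?M \<rightarrow>\<^sub>M subprob_algebra Out" by (rule measurable_prob_algebraD[OF K])
  have Ls: "?L \<in> density W h \<rightarrow>\<^sub>M subprob_algebra Out"
    using measurable_prob_algebraD[OF measurable_bind_gauss_vec_shift[OF assms(1) K c]]
    by (simp cong: measurable_cong_sets)
  have Kd: "K \<in> density ?M ?f \<rightarrow>\<^sub>M subprob_algebra Out" using Ks by (simp cong: measurable_cong_sets)
  have ne: "space (density ?M ?f) \<noteq> {}" by (simp add: space_pair_measure W.not_empty N.not_empty)
  show ?thesis
  proof (rule measure_eqI)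
    show "sets (density W h \<bind> ?L) = sets (density ?M ?f \<bind> K)"
      using sets_bind_measurable[OF Ls] sets_bind_measurable[OF Kd ne] by (simp add: W.not_empty)
    fix E assume "E \<in> sets (density W h \<bind> ?L)"
    then have E: "E \<in> sets Out" using sets_bind_measurable[OF Ls] by (simp add: W.not_empty)
    have [measurable]: "(\<lambda>x. emeasure (K x) E) \<in> borel_measurable ?M"
      using measurable_emeasure_kernel[OF Ks E] .
    have "(\<lambda>w. emeasure (?L w) E) \<in> borel_measurable W"
      using measurable_prob_algebraD[OF measurable_bind_gauss_vec_shift[OF assms(1) K c]] E
      by (rule measurable_emeasure_kernel)
    then have "emeasure (density W h \<bind> ?L) E = (\<integral>\<^sup>+ w. ennreal (h w) * emeasure (?L w) E \<partial>W)"
      by (simp add: emeasure_bind[OF _ Ls E] W.not_empty nn_integral_density)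
    also have "\<dots> = (\<integral>\<^sup>+ w. \<integral>\<^sup>+ y. ?f (w, y) * emeasure (K (w, y)) E \<partial>gauss_vec s \<partial>W)"
      by (intro nn_integral_cong)
         (auto simp: emeasure_bind_gauss_vec_shift[OF assms(1) Ks c _ E] nn_integral_cmult[symmetric]
                     ennreal_mult' h0 mult.assoc measurable_Pair2)
    also have "\<dots> = (\<integral>\<^sup>+ x. ?f x * emeasure (K x) E \<partial>?M)"
    proof -
      have "(\<lambda>x. ?f x * emeasure (K x) E) \<in> borel_measurable ?M" by measurable
      from N.nn_integral_fst[OF this] show ?thesis by simp
    qed
    also have "\<dots> = emeasure (density ?M ?f \<bind> K) E"
      by (subst emeasure_bind[OF ne Kd E]) (simp add: nn_integral_density)
    finally show "emeasure (density W h \<bind> ?L) E = emeasure (density ?M ?f \<bind> K) E" .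
  qed
qed

lemma bind_gauss_vec_eq_bind_pair:
  fixes K :: "'w \<times> ('p::finite \<Rightarrow> real) \<Rightarrow> 'o measure"
  assumes "s > 0" and "prob_space W" and "K \<in> W \<Otimes>\<^sub>M gauss_vec s \<rightarrow>\<^sub>M prob_algebra Out"
  shows "W \<bind> (\<lambda>w. gauss_vec s \<bind> (\<lambda>y. K (w, y))) = (W \<Otimes>\<^sub>M gauss_vec s) \<bind> K"
  using bind_gauss_vec_shift[OF assms, of "\<lambda>_. 1" "\<lambda>_ _. 0"]
  by (simp add: gauss_ratio_vec_zero density_1)

lemma nn_integral_gauss_ratio_vec_mixture_powr_le:
  fixes h :: "'w \<Rightarrow> real" and c :: "'w \<Rightarrow> 'p::finite \<Rightarrow> real"
  assumes "s > 0" and "\<alpha> \<ge> 1" and "prob_space W"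
    and [measurable]: "h \<in> borel_measurable W" and h0: "\<And>w. 0 \<le> h w"
    and [measurable]: "\<And>p. (\<lambda>w. c w p) \<in> borel_measurable W"
    and sensitivity: "AE w in W. (\<Sum>p\<in>UNIV. (c w p)\<^sup>2) \<le> \<Delta>\<^sup>2"
  shows "(\<integral>\<^sup>+ x. ennreal ((h (fst x) * gauss_ratio_vec s (c (fst x)) (snd x)) powr \<alpha>) \<partial>(W \<Otimes>\<^sub>M gauss_vec s))
       \<le> ennreal (exp ((\<alpha> - 1) * (\<alpha> * \<Delta>\<^sup>2 / (2 * s\<^sup>2)))) * (\<integral>\<^sup>+ w. ennreal (h w powr \<alpha>) \<partial>W)"
proof -
  interpret N: prob_space "gauss_vec s :: ('p \<Rightarrow> real) measure" by (rule prob_space_gauss_vec) fact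
  have "(\<integral>\<^sup>+ x. ennreal ((h (fst x) * gauss_ratio_vec s (c (fst x)) (snd x)) powr \<alpha>) \<partial>(W \<Otimes>\<^sub>M gauss_vec s))
      = (\<integral>\<^sup>+ w. \<integral>\<^sup>+ y. ennreal (h w powr \<alpha>) * ennreal (gauss_ratio_vec s (c w) y powr \<alpha>) \<partial>gauss_vec s \<partial>W)"
    by (subst N.nn_integral_fst[symmetric])
       (auto intro!: nn_integral_cong simp: powr_mult h0 less_imp_le[OF gauss_ratio_vec_pos] ennreal_mult)
  also have "\<dots> = (\<integral>\<^sup>+ w. ennreal (h w powr \<alpha>)
                     * ennreal (exp (\<alpha> * (\<alpha> - 1) * (\<Sum>p\<in>UNIV. (c w p)\<^sup>2) / (2 * s\<^sup>2))) \<partial>W)"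
    by (intro nn_integral_cong)
       (simp add: nn_integral_cmult nn_integral_gauss_ratio_vec_powr[OF assms(1)] measurable_Pair2)
  also have "\<dots> \<le> (\<integral>\<^sup>+ w. ennreal (h w powr \<alpha>) * ennreal (exp ((\<alpha> - 1) * (\<alpha> * \<Delta>\<^sup>2 / (2 * s\<^sup>2)))) \<partial>W)"
    using sensitivity
  proof (intro nn_integral_mono_AE, eventually_elim)
    case (elim w)
    have "\<alpha> * (\<alpha> - 1) * (\<Sum>p\<in>UNIV. (c w p)\<^sup>2) \<le> \<alpha> * (\<alpha> - 1) * \<Delta>\<^sup>2"
      using elim assms(2) by (intro mult_left_mono) auto
    then have "\<alpha> * (\<alpha> - 1) * (\<Sum>p\<in>UNIV. (c w p)\<^sup>2) / (2 * s\<^sup>2) \<le> (\<alpha> - 1) * (\<alpha> * \<Delta>\<^sup>2 / (2 * s\<^sup>2))"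
      by (simp add: divide_right_mono mult.assoc mult.left_commute)
    then show ?case by (intro mult_left_mono ennreal_leI) auto
  qed
  also have "\<dots> = ennreal (exp ((\<alpha> - 1) * (\<alpha> * \<Delta>\<^sup>2 / (2 * s\<^sup>2)))) * (\<integral>\<^sup>+ w. ennreal (h w powr \<alpha>) \<partial>W)"
    by (subst nn_integral_cmult[symmetric]) (auto simp: mult.commute)
  finally show ?thesis .
qed

theorem renyi_div_bind_gauss_vec_shift_le:
  fixes K :: "'w \<times> ('p::finite \<Rightarrow> real) \<Rightarrow> 'o measure" and c :: "'w \<Rightarrow> 'p \<Rightarrow> real"
  assumes "\<alpha> > 1" and "s > 0" and "prob_space WP" and "prob_space WQ"
    and K: "K \<in> WQ \<Otimes>\<^sub>M gauss_vec s \<rightarrow>\<^sub>M prob_algebra Out"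
    and c: "\<And>p. (\<lambda>w. c w p) \<in> borel_measurable WQ"
    and sensitivity: "AE w in WQ. (\<Sum>p\<in>UNIV. (c w p)\<^sup>2) \<le> \<Delta>\<^sup>2"
    and weights: "renyi_div \<alpha> WP WQ \<le> ereal \<gamma>"
  shows "renyi_div \<alpha> (WP \<bind> (\<lambda>w. gauss_vec s \<bind> (\<lambda>y. K (w, \<lambda>p. y p + c w p))))
                     (WQ \<bind> (\<lambda>w. gauss_vec s \<bind> (\<lambda>y. K (w, y))))
         \<le> ereal (\<gamma> + \<alpha> * \<Delta>\<^sup>2 / (2 * s\<^sup>2))"
proof -
  interpret WQ: prob_space WQ by fact
  define h where "h w = enn2real (RN_deriv WQ WP w)" for w
  define M f where "M = WQ \<Otimes>\<^sub>M (gauss_vec s :: ('p \<Rightarrow> real) measure)"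
    and "f x = h (fst x) * gauss_ratio_vec s (c (fst x)) (snd x)" for x
  have sets: "sets WP = sets WQ" and ac: "absolutely_continuous WQ WP"
    using renyi_div_le_ereal_D[OF weights] by auto
  have WP: "WP = density WQ h"
    unfolding h_def by (rule WQ.density_RN_deriv_enn2real[OF assms(3) sets ac])
  have [measurable]: "h \<in> borel_measurable WQ" unfolding h_def by measurable
  have f0: "0 \<le> f x" for x by (simp add: f_def h_def less_imp_le[OF gauss_ratio_vec_pos])
  have [measurable]: "f \<in> borel_measurable M" unfolding f_def M_def using c by measurable
  interpret N: prob_space "gauss_vec s :: ('p \<Rightarrow> real) measure" by (rule prob_space_gauss_vec) fact
  interpret pair_prob_space WQ "gauss_vec s :: ('p \<Rightarrow> real) measure" ..
  have M: "prob_space M" unfolding M_def by (rule prob_space_axioms)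
  have P: "WP \<bind> (\<lambda>w. gauss_vec s \<bind> (\<lambda>y. K (w, \<lambda>p. y p + c w p))) = density M f \<bind> K"
    unfolding WP M_def f_def by (rule bind_gauss_vec_shift[OF assms(2,4) K]) (simp_all add: h_def c)
  have Q: "WQ \<bind> (\<lambda>w. gauss_vec s \<bind> (\<lambda>y. K (w, y))) = M \<bind> K"
    unfolding M_def by (rule bind_gauss_vec_eq_bind_pair[OF assms(2,4) K])
  have KM: "K \<in> M \<rightarrow>\<^sub>M prob_algebra Out" using K by (simp add: M_def)
  have probP: "prob_space (density M f \<bind> K)"
    unfolding P[symmetric] using sets assms(3)
    by (intro prob_space_bind'[OF _ measurable_bind_gauss_vec_shift[OF assms(2) K c]])
       (simp add: space_prob_algebra)
  have probQ: "prob_space (M \<bind> K)"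
    using M by (intro prob_space_bind'[OF _ KM]) (simp add: space_prob_algebra)
  have "renyi_moment \<alpha> (density M f \<bind> K) (M \<bind> K) \<le> (\<integral>\<^sup>+ x. ennreal (f x powr \<alpha>) \<partial>M)"
    by (rule renyi_moment_bind_density_le[OF assms(1) M KM _ f0 probP]) simp
  also have "\<dots> \<le> ennreal (exp ((\<alpha> - 1) * (\<alpha> * \<Delta>\<^sup>2 / (2 * s\<^sup>2)))) * renyi_moment \<alpha> WP WQ"
    unfolding M_def f_def renyi_moment_def h_def[symmetric] using assms(1)
    by (intro nn_integral_gauss_ratio_vec_mixture_powr_le assms(2,4) c sensitivity) (simp_all add: h_def)
  finally show ?thesis
    unfolding P Q using bind_density_absolutely_continuous[OF M KM, of f]
    by (intro renyi_div_le_of_renyi_moment_le[OF assms(1) probP probQ _ _ weights]) simp_all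
qed

section \<open>The DPDGC mechanism\<close>

lemma borel_measurable_vec_nth[measurable]: "(\<lambda>x::'a::topological_space^'n::finite. x $ i) \<in> borel_measurable borel"
  by (intro borel_measurable_continuous_onI continuous_on_component continuous_on_id)

lemma borel_measurable_matrixI:
  assumes "\<And>i k. (\<lambda>x. f x $ i $ k) \<in> borel_measurable M"
  shows "(f :: _ \<Rightarrow> real^'h::finite^'n::finite) \<in> borel_measurable M"
  by (subst borel_measurable_euclidean_space) (auto simp: Basis_vec_def inner_axis assms)

definition matrix_of_entries :: "('n::finite \<times> 'h::finite \<Rightarrow> real) \<Rightarrow> real^'h^'n" where
  "matrix_of_entries y = (\<chi> i k. y (i, k))"

lemma measurable_matrix_of_entries[measurable]: "matrix_of_entries \<in> gauss_vec s \<rightarrow>\<^sub>M borel"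
  unfolding matrix_of_entries_def
  by (rule borel_measurable_matrixI) (simp add: measurable_cong_sets[OF sets_gauss_vec refl])

lemma gauss_noise_eq_distr_gauss_vec: "gauss_noise s = distr (gauss_vec s) borel matrix_of_entries"
  unfolding gauss_noise_def gauss_vec_def matrix_of_entries_def by simp

lemma measurable_dpdgc_Z[measurable]:
  "(\<lambda>N. dpdgc_Z A W b N) \<in> (borel :: (real^'h::finite^'n::finite) measure) \<rightarrow>\<^sub>M borel"
  unfolding dpdgc_Z_def by (rule borel_measurable_matrixI) (simp, measurable)

definition dpdgc_post ::
  "(real^'f::finite^'n::finite \<Rightarrow> ('n \<Rightarrow> 'c \<Rightarrow> bool) \<Rightarrow> real^'h::finite^'n \<Rightarrow> 'th measure)
   \<Rightarrow> ('th \<Rightarrow> real^'f \<Rightarrow> real^'h \<Rightarrow> 'y) \<Rightarrow> 'th measure \<Rightarrow> 'y measure \<Rightarrow> real^'f^'n \<Rightarrow> ('n \<Rightarrow> 'c \<Rightarrow> bool) \<Rightarrow> 'n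
   \<Rightarrow> ((real^'h^'n) \<times> (real^'h)) \<times> (real^'h^'n) \<Rightarrow> ('y \<times> (((real^'h^'n) \<times> (real^'h)) \<times> 'th)) measure" where
  "dpdgc_post B g MT MY X Y v x =
     B X Y (snd x) \<bind> (\<lambda>\<theta>. return (MY \<Otimes>\<^sub>M (borel \<Otimes>\<^sub>M MT)) (g \<theta> (X $ v) (snd x $ v), (fst x, \<theta>)))"

lemma measurable_dpdgc_post:
  fixes B :: "real^'f::finite^'n::finite \<Rightarrow> ('n \<Rightarrow> 'c \<Rightarrow> bool) \<Rightarrow> real^'h::finite^'n \<Rightarrow> 'th measure"
  assumes B: "\<And>X Y. B X Y \<in> borel \<rightarrow>\<^sub>M prob_algebra MT"
    and g: "(\<lambda>(\<theta>, x, z). g \<theta> x z) \<in> MT \<Otimes>\<^sub>M borel \<Otimes>\<^sub>M borel \<rightarrow>\<^sub>M MY"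
  shows "dpdgc_post B g MT MY X Y v \<in> borel \<Otimes>\<^sub>M borel \<rightarrow>\<^sub>M prob_algebra (MY \<Otimes>\<^sub>M (borel \<Otimes>\<^sub>M MT))"
  unfolding dpdgc_post_def
proof (rule measurable_bind_prob_space2)
  show "(\<lambda>x. B X Y (snd x)) \<in> borel \<Otimes>\<^sub>M borel \<rightarrow>\<^sub>M prob_algebra MT"
    by (rule measurable_compose[OF measurable_snd B])
  let ?S = "((borel :: ((real^'h^'n) \<times> (real^'h)) measure) \<Otimes>\<^sub>M (borel :: (real^'h^'n) measure)) \<Otimes>\<^sub>M MT"
  have "(\<lambda>p. (snd p, X $ v, snd (fst p) $ v)) \<in> ?S \<rightarrow>\<^sub>M MT \<Otimes>\<^sub>M borel \<Otimes>\<^sub>M borel"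
    by measurable
  from measurable_compose[OF this g]
  have [measurable]: "(\<lambda>p. g (snd p) (X $ v) (snd (fst p) $ v)) \<in> ?S \<rightarrow>\<^sub>M MY" by simp
  show "(\<lambda>(x, \<theta>). return (MY \<Otimes>\<^sub>M (borel \<Otimes>\<^sub>M MT)) (g \<theta> (X $ v) (snd x $ v), (fst x, \<theta>)))
      \<in> ?S \<rightarrow>\<^sub>M prob_algebra (MY \<Otimes>\<^sub>M (borel \<Otimes>\<^sub>M MT))"
    by (simp add: split_beta') measurable
qed

definition dpdgc_noise_kernel ::
  "(real^'f::finite^'n::finite \<Rightarrow> ('n \<Rightarrow> 'c \<Rightarrow> bool) \<Rightarrow> real^'h::finite^'n \<Rightarrow> 'th measure)
   \<Rightarrow> ('th \<Rightarrow> real^'f \<Rightarrow> real^'h \<Rightarrow> 'y) \<Rightarrow> 'th measure \<Rightarrow> 'y measure \<Rightarrow> real^'f^'n \<Rightarrow> ('n \<Rightarrow> 'c \<Rightarrow> bool)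
   \<Rightarrow> ('n \<Rightarrow> 'n \<Rightarrow> bool) \<Rightarrow> 'n \<Rightarrow> ((real^'h^'n) \<times> (real^'h)) \<times> ('n \<times> 'h \<Rightarrow> real)
   \<Rightarrow> ('y \<times> (((real^'h^'n) \<times> (real^'h)) \<times> 'th)) measure" where
  "dpdgc_noise_kernel B g MT MY X Y A v x =
     dpdgc_post B g MT MY X Y v (fst x, dpdgc_Z A (fst (fst x)) (snd (fst x)) (matrix_of_entries (snd x)))"

lemma dpdgc_mech_eq_bind_gauss_vec:
  fixes B :: "real^'f::finite^'n::finite \<Rightarrow> ('n \<Rightarrow> 'c::finite \<Rightarrow> bool) \<Rightarrow> real^'h::finite^'n \<Rightarrow> 'th measure"
  assumes "s > 0" and B: "\<And>X Y. B X Y \<in> borel \<rightarrow>\<^sub>M prob_algebra MT"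
    and g: "(\<lambda>(\<theta>, x, z). g \<theta> x z) \<in> MT \<Otimes>\<^sub>M borel \<Otimes>\<^sub>M borel \<rightarrow>\<^sub>M MY"
  shows "dpdgc_mech s Wd B g MT MY v (X, Y, A)
       = Wd (X, Y, A) \<bind> (\<lambda>wb. gauss_vec s \<bind> (\<lambda>y. dpdgc_noise_kernel B g MT MY X Y A v (wb, y)))"
proof -
  interpret prob_space "gauss_vec s :: ('n \<times> 'h \<Rightarrow> real) measure" by (rule prob_space_gauss_vec) fact
  have "gauss_noise s \<bind> (\<lambda>N. dpdgc_post B g MT MY X Y v (wb, dpdgc_Z A (fst wb) (snd wb) N))
      = gauss_vec s \<bind> (\<lambda>y. dpdgc_noise_kernel B g MT MY X Y A v (wb, y))"
    for wb
  proof -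
    have "(\<lambda>N. (wb, dpdgc_Z A (fst wb) (snd wb) N)) \<in> (borel :: (real^'h^'n) measure) \<rightarrow>\<^sub>M borel \<Otimes>\<^sub>M borel"
      by measurable
    from measurable_compose[OF this measurable_prob_algebraD[OF measurable_dpdgc_post[OF B g]]]
    show ?thesis
      unfolding gauss_noise_eq_distr_gauss_vec dpdgc_noise_kernel_def fst_conv snd_conv
      by (rule bind_distr[OF measurable_matrix_of_entries]) (simp add: not_empty)
  qed
  then show ?thesis
    unfolding dpdgc_mech_def by (simp add: Let_def dpdgc_post_def)
qed

lemma measurable_dpdgc_noise_kernel:
  fixes B :: "real^'f::finite^'n::finite \<Rightarrow> ('n \<Rightarrow> 'c \<Rightarrow> bool) \<Rightarrow> real^'h::finite^'n \<Rightarrow> 'th measure"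
  assumes B: "\<And>X Y. B X Y \<in> borel \<rightarrow>\<^sub>M prob_algebra MT"
    and g: "(\<lambda>(\<theta>, x, z). g \<theta> x z) \<in> MT \<Otimes>\<^sub>M borel \<Otimes>\<^sub>M borel \<rightarrow>\<^sub>M MY"
    and W: "sets W = sets (borel :: ((real^'h^'n) \<times> (real^'h)) measure)"
  shows "dpdgc_noise_kernel B g MT MY X Y A v \<in> W \<Otimes>\<^sub>M gauss_vec s \<rightarrow>\<^sub>M prob_algebra (MY \<Otimes>\<^sub>M (borel \<Otimes>\<^sub>M MT))"
proof -
  have sets: "sets (W \<Otimes>\<^sub>M gauss_vec s) = sets ((borel \<Otimes>\<^sub>M borel) \<Otimes>\<^sub>M PiM UNIV (\<lambda>_::'n \<times> 'h. borel))"
    by (rule sets_pair_measure_cong[OF _ sets_gauss_vec]) (subst borel_prod, simp add: W)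
  have "(\<lambda>x. dpdgc_Z A (fst (fst x)) (snd (fst x)) (matrix_of_entries (snd x))) \<in> W \<Otimes>\<^sub>M gauss_vec s \<rightarrow>\<^sub>M borel"
    unfolding measurable_cong_sets[OF sets refl] dpdgc_Z_def matrix_of_entries_def
    by (rule borel_measurable_matrixI) (simp, measurable)
  then have "(\<lambda>x. (fst x, dpdgc_Z A (fst (fst x)) (snd (fst x)) (matrix_of_entries (snd x))))
      \<in> W \<Otimes>\<^sub>M gauss_vec s \<rightarrow>\<^sub>M borel \<Otimes>\<^sub>M borel"
    using W by (intro measurable_Pair) (simp_all add: measurable_cong_sets[OF refl W[symmetric]])
  moreover have "dpdgc_post B g MT MY X Y v \<in> borel \<Otimes>\<^sub>M borel \<rightarrow>\<^sub>M prob_algebra (MY \<Otimes>\<^sub>M (borel \<Otimes>\<^sub>M MT))"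
    by (rule measurable_dpdgc_post[OF B g])
  ultimately show ?thesis
    unfolding dpdgc_noise_kernel_def by (rule measurable_compose)
qed

definition edge_flip_shift ::
  "('n \<Rightarrow> 'n \<Rightarrow> bool) \<Rightarrow> ('n \<Rightarrow> 'n \<Rightarrow> bool) \<Rightarrow> 'n \<Rightarrow> 'n \<Rightarrow> real^'h^'n \<Rightarrow> 'n \<times> 'h \<Rightarrow> real" where
  "edge_flip_shift A A' i0 j0 W p =
     (if fst p = i0 then ((if A i0 j0 then 1 else 0) - (if A' i0 j0 then 1 else 0)) * W $ j0 $ snd p else 0)"

lemma dpdgc_Z_edge_flip:
  assumes "\<And>i j. (i, j) \<noteq> (i0, j0) \<Longrightarrow> A i j = A' i j"
  shows "dpdgc_Z A W b (matrix_of_entries y)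
       = dpdgc_Z A' W b (matrix_of_entries (\<lambda>p. y p + edge_flip_shift A A' i0 j0 W p))"
proof -
  have "(\<Sum>j\<in>UNIV. (if A i j then 1 else 0) * W $ j $ k)
      = (\<Sum>j\<in>UNIV. (if A' i j then 1 else 0) * W $ j $ k + (if j = j0 then edge_flip_shift A A' i0 j0 W (i, k) else 0))"
    for i k by (intro sum.cong refl) (use assms in \<open>auto simp: edge_flip_shift_def\<close>)
  then show ?thesis
    unfolding dpdgc_Z_def matrix_of_entries_def by (simp add: vec_eq_iff sum.distrib)
qed

lemma dpdgc_noise_kernel_edge_flip:
  assumes "\<And>i j. (i, j) \<noteq> (i0, j0) \<Longrightarrow> A i j = A' i j"
  shows "dpdgc_noise_kernel B g MT MY X Y A v (wb, y)
       = dpdgc_noise_kernel B g MT MY X Y A' v (wb, \<lambda>p. y p + edge_flip_shift A A' i0 j0 (fst wb) p)"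
  unfolding dpdgc_noise_kernel_def fst_conv snd_conv
  by (subst dpdgc_Z_edge_flip[of i0 j0 A A']) (use assms in auto)

lemma sum_edge_flip_shift_squared:
  fixes W :: "real^'h::finite^'n::finite"
  assumes "A i0 j0 \<noteq> A' i0 j0"
  shows "(\<Sum>p\<in>UNIV. (edge_flip_shift A A' i0 j0 W p)\<^sup>2) = (norm (W $ j0))\<^sup>2"
proof -
  have "(\<Sum>p\<in>UNIV. (edge_flip_shift A A' i0 j0 W p)\<^sup>2)
      = (\<Sum>p\<in>UNIV \<times> UNIV. (edge_flip_shift A A' i0 j0 W p)\<^sup>2)"
    by (simp add: UNIV_Times_UNIV)
  also have "\<dots> = (\<Sum>i\<in>UNIV. \<Sum>k\<in>UNIV. (edge_flip_shift A A' i0 j0 W (i, k))\<^sup>2)"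
    by (simp add: sum.cartesian_product case_prod_unfold)
  also have "\<dots> = (\<Sum>i\<in>UNIV. if i = i0 then (\<Sum>k\<in>UNIV. (W $ j0 $ k)\<^sup>2) else 0)"
    by (intro sum.cong refl) (use assms in \<open>auto simp: edge_flip_shift_def power2_eq_square\<close>)
  also have "\<dots> = (\<Sum>k\<in>UNIV. (W $ j0 $ k)\<^sup>2)" by simp
  also have "\<dots> = (norm (W $ j0))\<^sup>2"
    by (simp add: norm_vec_def L2_set_def sum_nonneg)
  finally show ?thesis .
qed

lemma measurable_edge_flip_shift[measurable]:
  "(\<lambda>wb. edge_flip_shift A A' i0 j0 (fst wb) p) \<in> borel_measurable (borel :: ((real^'h::finite^'n::finite) \<times> (real^'h)) measure)"
  unfolding edge_flip_shift_def by (subst borel_prod[symmetric]) measurable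

lemma edge_adjacentE:
  assumes "edge_adjacent Lab D D'"
  obtains X Y A A' i0 j0 where "D = (X, Y, A)" and "D' = (X, Y, A')"
    and "valid_dataset Lab D" and "valid_dataset Lab D'"
    and "A i0 j0 \<noteq> A' i0 j0" and "\<And>i j. (i, j) \<noteq> (i0, j0) \<Longrightarrow> A i j = A' i j"
proof -
  obtain X Y A X' Y' A' where D: "D = (X, Y, A)" and D': "D' = (X', Y', A')"
    by (cases D; cases D') auto
  with assms have "valid_dataset Lab D" "valid_dataset Lab D'" "X' = X" "Y' = Y"
    and "card {(i, j). A i j \<noteq> A' i j} = 1"
    by (auto simp: edge_adjacent_def)
  moreover obtain i0 j0 where flip: "{(i, j). A i j \<noteq> A' i j} = {(i0, j0)}"
    using \<open>card _ = 1\<close> by (metis card_1_singletonE surj_pair)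
  then have "A i0 j0 \<noteq> A' i0 j0" and "\<And>i j. (i, j) \<noteq> (i0, j0) \<Longrightarrow> A i j = A' i j"
    by (auto simp: set_eq_iff)
  ultimately show ?thesis
    using that[of X Y A A' i0 j0] D D' by simp
qed

theorem corollaryH1:
  fixes \<alpha> s \<gamma>\<^sub>1 :: real
    and Lab :: "'n::finite set"
    and Wd :: "('n, 'f::finite, 'c::finite) dataset \<Rightarrow> ((real^'h::finite^'n) \<times> (real^'h)) measure"
    and B :: "real^'f^'n \<Rightarrow> ('n \<Rightarrow> 'c \<Rightarrow> bool) \<Rightarrow> real^'h^'n \<Rightarrow> 'th measure"
    and g :: "'th \<Rightarrow> real^'f \<Rightarrow> real^'h \<Rightarrow> 'y"
    and MT :: "'th measure" and MY :: "'y measure"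
  assumes "\<alpha> > 1" and "s > 0"
    and Wd_prob: "\<And>D. valid_dataset Lab D \<Longrightarrow> Wd D \<in> space (prob_algebra borel)"
    and Wd_rows: "\<And>D. valid_dataset Lab D \<Longrightarrow> AE wb in Wd D. \<forall>i. norm (fst wb $ i) = 1"
    and B_kernel: "\<And>X Y. B X Y \<in> borel \<rightarrow>\<^sub>M prob_algebra MT"
    and g_meas: "(\<lambda>(\<theta>, x, z). g \<theta> x z) \<in> MT \<Otimes>\<^sub>M borel \<Otimes>\<^sub>M borel \<rightarrow>\<^sub>M MY"
    and weights_rdp: "\<And>D D'. edge_adjacent Lab D D' \<Longrightarrow> renyi_div \<alpha> (Wd D) (Wd D') \<le> ereal \<gamma>\<^sub>1"
  shows "\<forall>v D D'. v \<notin> Lab \<longrightarrow> edge_adjacent Lab D D' \<longrightarrow>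
           renyi_div \<alpha> (dpdgc_mech s Wd B g MT MY v D) (dpdgc_mech s Wd B g MT MY v D')
             \<le> ereal (\<gamma>\<^sub>1 + \<alpha> / (2 * s\<^sup>2))"
proof (intro allI impI)
  txt \<open>The bound holds for every node v.\<close>
  fix v and D D' :: "('n, 'f, 'c) dataset" assume adj: "edge_adjacent Lab D D'"
  then obtain X Y A A' i0 j0 where D: "D = (X, Y, A)" and D': "D' = (X, Y, A')"
    and valid: "valid_dataset Lab D" "valid_dataset Lab D'"
    and flip: "A i0 j0 \<noteq> A' i0 j0" and same: "\<And>i j. (i, j) \<noteq> (i0, j0) \<Longrightarrow> A i j = A' i j"
    by (rule edge_adjacentE) blast
  define K where "K = dpdgc_noise_kernel B g MT MY X Y A' v"
  define c where "c wb = edge_flip_shift A A' i0 j0 (fst wb)" for wb :: "(real^'h^'n) \<times> (real^'h)"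
  have W: "prob_space (Wd D)" "prob_space (Wd D')" "sets (Wd D') = sets borel"
    using Wd_prob[OF valid(1)] Wd_prob[OF valid(2)] by (simp_all add: space_prob_algebra)
  have "dpdgc_noise_kernel B g MT MY X Y A v (wb, y) = K (wb, \<lambda>p. y p + c wb p)" for wb y
    unfolding K_def c_def using same by (rule dpdgc_noise_kernel_edge_flip)
  then have mech: "dpdgc_mech s Wd B g MT MY v D = Wd D \<bind> (\<lambda>w. gauss_vec s \<bind> (\<lambda>y. K (w, \<lambda>p. y p + c w p)))"
    "dpdgc_mech s Wd B g MT MY v D' = Wd D' \<bind> (\<lambda>w. gauss_vec s \<bind> (\<lambda>y. K (w, y)))"
    by (simp_all add: D D' dpdgc_mech_eq_bind_gauss_vec[OF assms(2) B_kernel g_meas] K_def)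
  have "K \<in> Wd D' \<Otimes>\<^sub>M gauss_vec s \<rightarrow>\<^sub>M prob_algebra (MY \<Otimes>\<^sub>M (borel \<Otimes>\<^sub>M MT))"
    unfolding K_def using B_kernel g_meas W(3) by (rule measurable_dpdgc_noise_kernel)
  moreover have "(\<lambda>wb. c wb p) \<in> borel_measurable (Wd D')" for p
    unfolding measurable_cong_sets[OF W(3) refl] c_def by measurable
  moreover have "AE wb in Wd D'. (\<Sum>p\<in>UNIV. (c wb p)\<^sup>2) \<le> 1\<^sup>2"
    using Wd_rows[OF valid(2)]
    by eventually_elim (simp add: c_def sum_edge_flip_shift_squared[where A=A and A'=A', OF flip])
  ultimately have "renyi_div \<alpha> (Wd D \<bind> (\<lambda>w. gauss_vec s \<bind> (\<lambda>y. K (w, \<lambda>p. y p + c w p))))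
      (Wd D' \<bind> (\<lambda>w. gauss_vec s \<bind> (\<lambda>y. K (w, y)))) \<le> ereal (\<gamma>\<^sub>1 + \<alpha> * 1\<^sup>2 / (2 * s\<^sup>2))"
    by (rule renyi_div_bind_gauss_vec_shift_le[OF assms(1,2) W(1,2) _ _ _ weights_rdp[OF adj]])
  then show "renyi_div \<alpha> (dpdgc_mech s Wd B g MT MY v D) (dpdgc_mech s Wd B g MT MY v D')
      \<le> ereal (\<gamma>\<^sub>1 + \<alpha> / (2 * s\<^sup>2))"
    unfolding mech by simp
qed

end
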